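(* Let $\mathbf{x}_1,\dots,\mathbf{x}_n\in\mathbb{R}^p$ be observations with labels $y_i\in\{-1,1\}$, let $I_+=\{i: y_i=1\}$, $I_-=\{i:y_i=-1\}$, $n_+=|I_+|$, $n_-=|I_-|$, let $\lambda>0$, and let $\mathbf{K}\in\mathbb{R}^{n\times n}$ be the kernel matrix with entries $\mathbf{K}_{lm}=K(\mathbf{x}_l,\mathbf{x}_m)$ for a positive definite kernel $K$, with $\mathbf{k}_i$ denoting the $i$th column of $\mathbf{K}$. Suppose $\mathbf{K}=\mathbf{V}\mathbf{V}^\top$ for a real matrix $\mathbf{V}$, and let $\mathbf{v}_i$ denote the $i$th row of $\mathbf{V}$. Then the kernel ROC-SVM problem $$\min_{\boldsymbol{\theta}\in\mathbb{R}^n}\ \frac{1}{n_+n_-}\sum_{i\in I_+}\sum_{j\in I_-}\big[1-\boldsymbol{\theta}^\top(\mathbf{k}_i-\mathbf{k}_j)\big]_+ +\frac{\lambda}{2}\boldsymbol{\theta}^\top\mathbf{K}\boldsymbol{\theta}$$ is equivalent to solving the linear ROC-SVM problem $$\min_{\boldsymbol{\beta}}\ \frac{1}{n_+n_-}\sum_{i\in I_+}\sum_{j\in I_-}\big[1-\boldsymbol{\beta}^\top(\mathbf{v}_i-\mathbf{v}_j)\big]_+ +\frac{\lambda}{2}\boldsymbol{\beta}^\top\boldsymbol{\beta}.$$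
   Context: $[z]_+=\max\{z,0\}$. The first problem arises from the ROC-SVM $\min_{f\in\mathcal{H}_K}\frac{1}{n_+n_-}\sum_{i\in I_+}\sum_{j\in I_-}[1-\{f(\mathbf{x}_i)-f(\mathbf{x}_j)\}]_++\frac{\lambda}{2}\|f\|^2_{\mathcal{H}_K}$ by writing $f(\mathbf{x})=\alpha+\sum_{k=1}^n\theta_kK(\mathbf{x},\mathbf{x}_k)$, where $\mathcal{H}_K$ is the reproducing kernel Hilbert space of $K$ (the intercept $\alpha$ cancels in differences). *)

theory Defs
  imports "HOL-Analysis.Analysis"
begin

text \<open>Positive (semi)definite kernel in the machine-learning sense: symmetric and
  every Gram matrix is positive semidefinite.\<close>
definition pd_kernel :: "('a \<Rightarrow> 'a \<Rightarrow> real) \<Rightarrow> bool" where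
  "pd_kernel Kf \<longleftrightarrow> (\<forall>a b. Kf a b = Kf b a) \<and>
     (\<forall>(m::nat) (z::nat \<Rightarrow> 'a) (c::nat \<Rightarrow> real).
        0 \<le> (\<Sum>i<m. \<Sum>j<m. c i * c j * Kf (z i) (z j)))"

definition hinge :: "real \<Rightarrow> real" where
  "hinge z = max z 0"

definition Ipos :: "('n \<Rightarrow> real) \<Rightarrow> 'n set" where
  "Ipos y = {i. y i = 1}"

definition Ineg :: "('n \<Rightarrow> real) \<Rightarrow> 'n set" where
  "Ineg y = {i. y i = -1}"

definition kernel_roc_obj ::
  "('n::finite \<Rightarrow> real) \<Rightarrow> real \<Rightarrow> real^'n^'n \<Rightarrow> real^'n \<Rightarrow> real" where
  "kernel_roc_obj y lam K \<theta> =
     1 / (real (card (Ipos y)) * real (card (Ineg y))) *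
       (\<Sum>i\<in>Ipos y. \<Sum>j\<in>Ineg y. hinge (1 - \<theta> \<bullet> (column i K - column j K)))
     + lam / 2 * (\<theta> \<bullet> (K *v \<theta>))"

definition linear_roc_obj ::
  "('n::finite \<Rightarrow> real) \<Rightarrow> real \<Rightarrow> real^'r^'n \<Rightarrow> real^'r \<Rightarrow> real" where
  "linear_roc_obj y lam V \<beta> =
     1 / (real (card (Ipos y)) * real (card (Ineg y))) *
       (\<Sum>i\<in>Ipos y. \<Sum>j\<in>Ineg y. hinge (1 - \<beta> \<bullet> (row i V - row j V)))
     + lam / 2 * (\<beta> \<bullet> \<beta>)"

end

theory Submission
  imports Defs
begin

text \<open>With \<open>K = V V\<^sup>T\<close> one has \<open>\<theta>\<^sup>T k\<^sub>i = (V\<^sup>T \<theta>)\<^sup>T v\<^sub>i\<close> and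
  \<open>\<theta>\<^sup>T K \<theta> = |V\<^sup>T \<theta>|\<^sup>2\<close>, so the kernel objective at \<open>\<theta>\<close> is the linear objective
  at \<open>\<beta> = V\<^sup>T \<theta>\<close>. Conversely every \<open>\<beta>\<close> splits orthogonally as \<open>V\<^sup>T \<theta> + w\<close> with
  \<open>V w = 0\<close>; the component \<open>w\<close> does not change any hinge term and adds
  \<open>\<lambda>/2 |w|\<^sup>2\<close> to the penalty, so nothing is lost by restricting to the row space
  of \<open>V\<close>, and for \<open>\<lambda> > 0\<close> every minimiser lies in it.\<close>

lemma column_matrix_mult_transpose:
  fixes V :: "real^'r^'n"
  shows "column i (V ** transpose V) = V *v row i V"
  by (simp add: vec_eq_iff matrix_matrix_mult_def matrix_vector_mult_def column_def
      row_def transpose_def)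

lemma row_space_null_space_decomp:
  fixes A :: "real^'r^'n"
  obtains x w where "\<beta> = transpose A *v x + w" and "A *v w = 0"
proof -
  let ?S = "range (\<lambda>x. transpose A *v x)"
  have "subspace ?S"
    by (rule linear_subspace_image[OF matrix_vector_mul_linear subspace_UNIV])
  then have span_S: "span ?S = ?S"
    by (rule span_eq_iff[THEN iffD2])
  obtain u w where u: "u \<in> ?S" and w_orth: "\<And>v. v \<in> ?S \<Longrightarrow> orthogonal w v"
      and \<beta>: "\<beta> = u + w"
    using orthogonal_subspace_decomp_exists[of ?S \<beta>] unfolding span_S by blast
  have "orthogonal w (transpose A *v (A *v w))"
    by (rule w_orth) blast
  then have "(A *v w) \<bullet> (A *v w) = 0"
    by (simp add: orthogonal_def inner_commute[of w] dot_lmul_matrix)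
  with u \<beta> that show ?thesis
    by auto
qed

lemma kernel_roc_obj_factor:
  fixes V :: "real^'r^'n"
  shows "kernel_roc_obj y lam (V ** transpose V) \<theta> = linear_roc_obj y lam V (transpose V *v \<theta>)"
proof -
  have hinge_arg: "\<theta> \<bullet> (column i (V ** transpose V) - column j (V ** transpose V))
      = (transpose V *v \<theta>) \<bullet> (row i V - row j V)" for i j
    by (simp add: column_matrix_mult_transpose dot_lmul_matrix
        matrix_vector_mult_diff_distrib inner_diff_right)
  have penalty: "\<theta> \<bullet> ((V ** transpose V) *v \<theta>) = (transpose V *v \<theta>) \<bullet> (transpose V *v \<theta>)"
    by (metis dot_lmul_matrix matrix_vector_mul_assoc transpose_matrix_vector)
  show ?thesis
    unfolding kernel_roc_obj_def linear_roc_obj_def hinge_arg penalty ..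
qed

lemma linear_roc_obj_add_null_space:
  fixes V :: "real^'r^'n"
  assumes "V *v w = 0"
  shows "linear_roc_obj y lam V (transpose V *v \<theta> + w)
    = linear_roc_obj y lam V (transpose V *v \<theta>) + lam / 2 * (w \<bullet> w)"
proof -
  have row_w: "row i V \<bullet> w = 0" for i
    using assms matrix_vector_mul_component[of V w i] by (simp add: row_def)
  have hinge_arg: "(transpose V *v \<theta> + w) \<bullet> (row i V - row j V)
      = (transpose V *v \<theta>) \<bullet> (row i V - row j V)" for i j
    using row_w[of i] row_w[of j]
    by (simp add: inner_add_left inner_diff_right inner_commute[of w])
  have "(transpose V *v \<theta>) \<bullet> w = 0"
    using assms by (simp add: dot_lmul_matrix)
  then have penalty: "(transpose V *v \<theta> + w) \<bullet> (transpose V *v \<theta> + w)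
      = (transpose V *v \<theta>) \<bullet> (transpose V *v \<theta>) + w \<bullet> w"
    by (simp add: inner_add_left inner_add_right inner_commute)
  show ?thesis
    unfolding linear_roc_obj_def hinge_arg penalty by (simp add: algebra_simps)
qed

lemma linear_roc_obj_row_space_le:
  fixes V :: "real^'r^'n"
  assumes "lam \<ge> 0"
  shows "\<exists>\<theta>. linear_roc_obj y lam V (transpose V *v \<theta>) \<le> linear_roc_obj y lam V \<beta>"
proof -
  obtain \<theta> w where \<beta>: "\<beta> = transpose V *v \<theta> + w" and w: "V *v w = 0"
    by (rule row_space_null_space_decomp)
  have "0 \<le> lam / 2 * (w \<bullet> w)"
    using assms by simp
  then show ?thesis
    using linear_roc_obj_add_null_space[OF w, of y lam \<theta>] \<beta> by (intro exI[of _ \<theta>]) simp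
qed

lemma linear_roc_obj_minimiser_in_row_space:
  fixes V :: "real^'r^'n"
  assumes "lam > 0" and min: "\<forall>\<beta>'. linear_roc_obj y lam V \<beta> \<le> linear_roc_obj y lam V \<beta>'"
  shows "\<exists>\<theta>. \<beta> = transpose V *v \<theta>"
proof -
  obtain \<theta> w where \<beta>: "\<beta> = transpose V *v \<theta> + w" and w: "V *v w = 0"
    by (rule row_space_null_space_decomp)
  have "linear_roc_obj y lam V \<beta> \<le> linear_roc_obj y lam V (transpose V *v \<theta>)"
    using min by blast
  then have "lam / 2 * (w \<bullet> w) \<le> 0"
    using linear_roc_obj_add_null_space[OF w, of y lam \<theta>] \<beta> by simp
  then have "w \<bullet> w \<le> 0"
    using \<open>lam > 0\<close> by (simp add: mult_le_0_iff)
  then have "w = 0"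
    using inner_ge_zero[of w] by simp
  with \<beta> show ?thesis
    by auto
qed

theorem proposition1:
  fixes x :: "'n::finite \<Rightarrow> real^'p"
    and y :: "'n \<Rightarrow> real"
    and lam :: real
    and Kf :: "real^'p \<Rightarrow> real^'p \<Rightarrow> real"
    and K :: "real^'n^'n"
    and V :: "real^'r^'n"
  assumes labels: "\<forall>i. y i \<in> {-1, 1}"
    and lam_pos: "lam > 0"
    and pd: "pd_kernel Kf"
    and K_def: "\<forall>l m. K $ l $ m = Kf (x l) (x m)"
    and factor: "K = V ** transpose V"
  shows "(\<forall>\<theta>. kernel_roc_obj y lam K \<theta> = linear_roc_obj y lam V (transpose V *v \<theta>))
    \<and> (\<forall>\<theta>. (\<forall>\<theta>'. kernel_roc_obj y lam K \<theta> \<le> kernel_roc_obj y lam K \<theta>')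
            \<longleftrightarrow> (\<forall>\<beta>. linear_roc_obj y lam V (transpose V *v \<theta>) \<le> linear_roc_obj y lam V \<beta>))
    \<and> (\<forall>\<beta>. (\<forall>\<beta>'. linear_roc_obj y lam V \<beta> \<le> linear_roc_obj y lam V \<beta>')
            \<longrightarrow> (\<exists>\<theta>. \<beta> = transpose V *v \<theta>))"
proof -
  have obj_eq: "kernel_roc_obj y lam K \<theta> = linear_roc_obj y lam V (transpose V *v \<theta>)" for \<theta>
    unfolding factor by (rule kernel_roc_obj_factor)
  have "(\<forall>\<theta>'. kernel_roc_obj y lam K \<theta> \<le> kernel_roc_obj y lam K \<theta>')
      \<longleftrightarrow> (\<forall>\<beta>. linear_roc_obj y lam V (transpose V *v \<theta>) \<le> linear_roc_obj y lam V \<beta>)" for \<theta>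
    unfolding obj_eq using linear_roc_obj_row_space_le[of lam y V] lam_pos
    by (meson less_imp_le order_trans)
  then show ?thesis
    using obj_eq linear_roc_obj_minimiser_in_row_space[OF lam_pos] by blast
qed

end
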